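(* In a pre-Hilbert $*$-category: (i) every isometry is contractive; (ii) if $f\colon X\to Y$ and $g\colon Y\to Z$ are contractive, then $gf$ is contractive; (iii) if $f$ is contractive, then $f^*$ is contractive.
   Context: A $*$-category is a category with a choice of $f^*\colon Y\to X$ for each $f\colon X\to Y$ such that $1^*=1$, $(gf)^*=f^*g^*$, $(f^* )^*=f$; $f$ is an isometry if $f^*f=1$. A pre-Hilbert $*$-category is a $*$-category with (R1) a zero object, (R2) orthonormal biproducts of all pairs of objects (biproducts $(X,s_1,r_1,s_2,r_2)$ with $r_k=s_k^*$), (R3) an isometric kernel for every morphism, and (R4) every diagonal $\Delta\colon X\to X\oplus X$ a kernel of some morphism. Such a category is additive. For Hermitian endomorphisms $a,b\colon A\to A$ (i.e. $a^*=a$, $b^*=b$), $a\leq b$ means $b-a=y^*y$ for some object $Y$ and some $y\colon A\to Y$. A morphism $f$ is contractive (a contraction) if $f^*f\leq 1$. *)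

theory Defs
  imports Main
begin

text \<open>A category with a choice of adjoints. Objects form the type 'o, morphisms the
type 'm. scomp C g f is the composite g after f (defined when sdom g = scod f).\<close>

record ('o, 'm) scat =
  sdom  :: "'m \<Rightarrow> 'o"
  scod  :: "'m \<Rightarrow> 'o"
  sid   :: "'o \<Rightarrow> 'm"
  scomp :: "'m \<Rightarrow> 'm \<Rightarrow> 'm"
  sstar :: "'m \<Rightarrow> 'm"

definition hom :: "('o, 'm) scat \<Rightarrow> 'm \<Rightarrow> 'o \<Rightarrow> 'o \<Rightarrow> bool" where
  "hom C f X Y \<longleftrightarrow> sdom C f = X \<and> scod C f = Y"

definition star_category :: "('o, 'm) scat \<Rightarrow> bool" where
  "star_category C \<longleftrightarrow>
     (\<forall>X. sdom C (sid C X) = X \<and> scod C (sid C X) = X) \<and>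
     (\<forall>f g. sdom C g = scod C f \<longrightarrow>
        sdom C (scomp C g f) = sdom C f \<and> scod C (scomp C g f) = scod C g) \<and>
     (\<forall>f. scomp C (sid C (scod C f)) f = f \<and> scomp C f (sid C (sdom C f)) = f) \<and>
     (\<forall>f g h. sdom C h = scod C g \<and> sdom C g = scod C f \<longrightarrow>
        scomp C (scomp C h g) f = scomp C h (scomp C g f)) \<and>
     (\<forall>f. sdom C (sstar C f) = scod C f \<and> scod C (sstar C f) = sdom C f) \<and>
     (\<forall>X. sstar C (sid C X) = sid C X) \<and>
     (\<forall>f g. sdom C g = scod C f \<longrightarrow>
        sstar C (scomp C g f) = scomp C (sstar C f) (sstar C g)) \<and>
     (\<forall>f. sstar C (sstar C f) = f)"

definition zero_obj :: "('o, 'm) scat \<Rightarrow> 'o \<Rightarrow> bool" where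
  "zero_obj C Z \<longleftrightarrow> (\<forall>X. (\<exists>!f. hom C f X Z) \<and> (\<exists>!f. hom C f Z X))"

definition zero_mor :: "('o, 'm) scat \<Rightarrow> 'm \<Rightarrow> bool" where
  "zero_mor C f \<longleftrightarrow> (\<exists>Z g h. zero_obj C Z \<and> hom C g (sdom C f) Z \<and>
      hom C h Z (scod C f) \<and> f = scomp C h g)"

definition biproduct ::
  "('o, 'm) scat \<Rightarrow> 'o \<Rightarrow> 'o \<Rightarrow> 'o \<Rightarrow> 'm \<Rightarrow> 'm \<Rightarrow> 'm \<Rightarrow> 'm \<Rightarrow> bool" where
  "biproduct C X1 X2 P s1 r1 s2 r2 \<longleftrightarrow>
     hom C s1 X1 P \<and> hom C r1 P X1 \<and> hom C s2 X2 P \<and> hom C r2 P X2 \<and>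
     scomp C r1 s1 = sid C X1 \<and> scomp C r2 s2 = sid C X2 \<and>
     zero_mor C (scomp C r1 s2) \<and> zero_mor C (scomp C r2 s1) \<and>
     (\<forall>A f g. hom C f A X1 \<and> hom C g A X2 \<longrightarrow>
        (\<exists>!h. hom C h A P \<and> scomp C r1 h = f \<and> scomp C r2 h = g)) \<and>
     (\<forall>A f g. hom C f X1 A \<and> hom C g X2 A \<longrightarrow>
        (\<exists>!h. hom C h P A \<and> scomp C h s1 = f \<and> scomp C h s2 = g))"

definition orthonormal_biproduct ::
  "('o, 'm) scat \<Rightarrow> 'o \<Rightarrow> 'o \<Rightarrow> 'o \<Rightarrow> 'm \<Rightarrow> 'm \<Rightarrow> 'm \<Rightarrow> 'm \<Rightarrow> bool" where
  "orthonormal_biproduct C X1 X2 P s1 r1 s2 r2 \<longleftrightarrow>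
     biproduct C X1 X2 P s1 r1 s2 r2 \<and> r1 = sstar C s1 \<and> r2 = sstar C s2"

definition is_kernel :: "('o, 'm) scat \<Rightarrow> 'm \<Rightarrow> 'm \<Rightarrow> bool" where
  "is_kernel C k f \<longleftrightarrow> scod C k = sdom C f \<and> zero_mor C (scomp C f k) \<and>
     (\<forall>g. scod C g = sdom C f \<and> zero_mor C (scomp C f g) \<longrightarrow>
        (\<exists>!h. hom C h (sdom C g) (sdom C k) \<and> scomp C k h = g))"

definition isometry :: "('o, 'm) scat \<Rightarrow> 'm \<Rightarrow> bool" where
  "isometry C f \<longleftrightarrow> scomp C (sstar C f) f = sid C (sdom C f)"

definition pre_hilbert :: "('o, 'm) scat \<Rightarrow> bool" where
  "pre_hilbert C \<longleftrightarrow> star_category C \<and>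
     (\<exists>Z. zero_obj C Z) \<and>
     (\<forall>X1 X2. \<exists>P s1 r1 s2 r2. orthonormal_biproduct C X1 X2 P s1 r1 s2 r2) \<and>
     (\<forall>f. \<exists>k. is_kernel C k f \<and> isometry C k) \<and>
     (\<forall>X P s1 r1 s2 r2 d. orthonormal_biproduct C X X P s1 r1 s2 r2 \<and> hom C d X P \<and>
        scomp C r1 d = sid C X \<and> scomp C r2 d = sid C X \<longrightarrow> (\<exists>g. is_kernel C d g))"

text \<open>Addition of parallel morphisms induced by biproducts:
  f + g = nabla after (f,g), where (f,g) : A -> B+B and nabla : B+B -> B is the codiagonal.\<close>
definition is_sum :: "('o, 'm) scat \<Rightarrow> 'm \<Rightarrow> 'm \<Rightarrow> 'm \<Rightarrow> bool" where
  "is_sum C f g h \<longleftrightarrow> (\<exists>A B P s1 r1 s2 r2 u v.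
     hom C f A B \<and> hom C g A B \<and> biproduct C B B P s1 r1 s2 r2 \<and>
     hom C u A P \<and> scomp C r1 u = f \<and> scomp C r2 u = g \<and>
     hom C v P B \<and> scomp C v s1 = sid C B \<and> scomp C v s2 = sid C B \<and>
     h = scomp C v u)"

definition madd :: "('o, 'm) scat \<Rightarrow> 'm \<Rightarrow> 'm \<Rightarrow> 'm" where
  "madd C f g = (THE h. is_sum C f g h)"

definition hermitian :: "('o, 'm) scat \<Rightarrow> 'm \<Rightarrow> bool" where
  "hermitian C a \<longleftrightarrow> sdom C a = scod C a \<and> sstar C a = a"

text \<open>a \<le> b for Hermitian endomorphisms of A: b - a = y* y for some y : A -> Y,
  i.e. (in the additive category) b = a + y* y.\<close>
definition mle :: "('o, 'm) scat \<Rightarrow> 'm \<Rightarrow> 'm \<Rightarrow> bool" where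
  "mle C a b \<longleftrightarrow> hermitian C a \<and> hermitian C b \<and> sdom C a = sdom C b \<and>
     (\<exists>y. sdom C y = sdom C a \<and> b = madd C a (scomp C (sstar C y) y))"

definition contractive :: "('o, 'm) scat \<Rightarrow> 'm \<Rightarrow> bool" where
  "contractive C f \<longleftrightarrow> mle C (scomp C (sstar C f) f) (sid C (sdom C f))"

end

theory Submission
  imports Defs
begin

text \<open>
  Biproducts make every hom-set a commutative monoid, and (R3), (R4) make it a group. Let l be
  an isometric kernel of the codiagonal of X \<oplus> X, with components c1 and c2. Then c1 + c2 = 0
  and c1* c1 + c2* c2 = l* l = 1, so expanding (c1 + c2)* (c1 + c2) = 0 gives an additive inverse
  of the identity on the domain of l. With m = -c1*, the morphism s1 + l m is annihilated by l*,
  hence factors through the diagonal, which is a kernel by (R4); equating its two components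
  yields an additive inverse of the identity on X.

  Once morphisms can be subtracted, f is a contraction iff 1 = f* f + y* y for some y. An
  isometry is a contraction with y = 0. If y and w witness that f and g are contractions, then
  the tuple (w f, y) witnesses that g f is one. If y witnesses that f is a contraction, then the
  tuple m = (f, y) is an isometry with f = s1* m, and z = s1 - m f* satisfies f f* + z* z = 1.
\<close>

named_theorems cat_simps

locale star_cat =
  fixes C :: "('o, 'm) scat"
  assumes star_category: "star_category C"
begin

abbreviation comp (infixr "\<odot>" 70) where "g \<odot> f \<equiv> scomp C g f"
abbreviation adj ("_\<^sup>\<dagger>" [1000] 1000) where "f\<^sup>\<dagger> \<equiv> sstar C f"
abbreviation ident ("\<one>\<^bsub>_\<^esub>") where "\<one>\<^bsub>X\<^esub> \<equiv> sid C X"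

lemma dom_id [simp]: "sdom C \<one>\<^bsub>X\<^esub> = X"
  and cod_id [simp]: "scod C \<one>\<^bsub>X\<^esub> = X"
  and dom_adj [simp]: "sdom C f\<^sup>\<dagger> = scod C f"
  and cod_adj [simp]: "scod C f\<^sup>\<dagger> = sdom C f"
  and adj_id [simp]: "\<one>\<^bsub>X\<^esub>\<^sup>\<dagger> = \<one>\<^bsub>X\<^esub>"
  and adj_adj [simp]: "f\<^sup>\<dagger>\<^sup>\<dagger> = f"
  using star_category unfolding star_category_def by blast+

lemma dom_comp [cat_simps]: "sdom C g = scod C f \<Longrightarrow> sdom C (g \<odot> f) = sdom C f"
  and cod_comp [cat_simps]: "sdom C g = scod C f \<Longrightarrow> scod C (g \<odot> f) = scod C g"
  and comp_id_left [cat_simps]: "scod C f = Y \<Longrightarrow> \<one>\<^bsub>Y\<^esub> \<odot> f = f"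
  and comp_id_right [cat_simps]: "sdom C f = X \<Longrightarrow> f \<odot> \<one>\<^bsub>X\<^esub> = f"
  and comp_assoc [cat_simps]:
    "sdom C h = scod C g \<Longrightarrow> sdom C g = scod C f \<Longrightarrow> (h \<odot> g) \<odot> f = h \<odot> (g \<odot> f)"
  and adj_comp [cat_simps]: "sdom C g = scod C f \<Longrightarrow> (g \<odot> f)\<^sup>\<dagger> = f\<^sup>\<dagger> \<odot> g\<^sup>\<dagger>"
  using star_category unfolding star_category_def by blast+

declare hom_def [cat_simps]

lemma hom_id [intro, simp]: "hom C \<one>\<^bsub>X\<^esub> X X"
  by (simp add: hom_def)

lemma hom_comp [intro]: "hom C f A B \<Longrightarrow> hom C g B D \<Longrightarrow> hom C (g \<odot> f) A D"
  by (simp add: cat_simps)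

lemma hom_adj [intro]: "hom C f A B \<Longrightarrow> hom C f\<^sup>\<dagger> B A"
  by (simp add: hom_def)

lemma comp_reduce:
  "a \<odot> b = c \<Longrightarrow> sdom C a = scod C b \<Longrightarrow> sdom C b = scod C x \<Longrightarrow> a \<odot> (b \<odot> x) = c \<odot> x"
  using comp_assoc by metis

end

locale pre_hilbert_category =
  fixes C :: "('o, 'm) scat"
  assumes pre_hilbert: "pre_hilbert C"

sublocale pre_hilbert_category \<subseteq> star_cat
  using pre_hilbert by unfold_locales (simp add: pre_hilbert_def)

context pre_hilbert_category
begin

section \<open>Zero morphisms\<close>

lemma zero_obj_in_unique: "zero_obj C Z \<Longrightarrow> hom C f X Z \<Longrightarrow> hom C f' X Z \<Longrightarrow> f = f'"
  and zero_obj_out_unique: "zero_obj C Z \<Longrightarrow> hom C f Z X \<Longrightarrow> hom C f' Z X \<Longrightarrow> f = f'"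
  unfolding zero_obj_def by (metis ex1E)+

lemma zero_morI: "zero_obj C Z \<Longrightarrow> hom C g X Z \<Longrightarrow> hom C h Z Y \<Longrightarrow> zero_mor C (h \<odot> g)"
  unfolding zero_mor_def by (intro exI[of _ Z] exI[of _ g] exI[of _ h]) (simp add: cat_simps)

lemma zero_morE:
  assumes "zero_mor C f" "hom C f X Y"
  obtains Z g h where "zero_obj C Z" "hom C g X Z" "hom C h Z Y" "f = h \<odot> g"
  using assms unfolding zero_mor_def hom_def by auto

lemma zero_mor_unique:
  assumes "zero_mor C f" "zero_mor C f'" "hom C f X Y" "hom C f' X Y"
  shows "f = f'"
proof -
  obtain Z g h where Z: "zero_obj C Z" "hom C g X Z" "hom C h Z Y" "f = h \<odot> g"
    using assms(1,3) by (rule zero_morE)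
  obtain Z' g' h' where Z': "zero_obj C Z'" "hom C g' X Z'" "hom C h' Z' Y" "f' = h' \<odot> g'"
    using assms(2,4) by (rule zero_morE)
  obtain a where a: "hom C a Z Z'"
    using Z(1) unfolding zero_obj_def by (meson ex1E)
  have "g' = a \<odot> g"
    using zero_obj_in_unique[OF Z'(1,2) hom_comp[OF Z(2) a]] .
  moreover have "h = h' \<odot> a"
    using zero_obj_out_unique[OF Z(1,3) hom_comp[OF a Z'(3)]] .
  ultimately show ?thesis
    using Z Z' a by (simp add: cat_simps)
qed

lemma zero_mor_ex: "\<exists>f. hom C f X Y \<and> zero_mor C f"
proof -
  obtain Z where Z: "zero_obj C Z"
    using pre_hilbert unfolding pre_hilbert_def by blast
  then obtain g h where "hom C g X Z" "hom C h Z Y"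
    unfolding zero_obj_def by (meson ex1E)
  then show ?thesis
    using zero_morI[OF Z] by blast
qed

definition zero_hom ("\<zero>\<^bsub>_,_\<^esub>") where
  "\<zero>\<^bsub>X,Y\<^esub> = (THE f. hom C f X Y \<and> zero_mor C f)"

lemma hom_zero [intro, simp]: "hom C \<zero>\<^bsub>X,Y\<^esub> X Y"
  and zero_mor_zero: "zero_mor C \<zero>\<^bsub>X,Y\<^esub>"
proof -
  have "\<exists>!f. hom C f X Y \<and> zero_mor C f"
    using zero_mor_ex zero_mor_unique by blast
  then have "hom C \<zero>\<^bsub>X,Y\<^esub> X Y \<and> zero_mor C \<zero>\<^bsub>X,Y\<^esub>"
    unfolding zero_hom_def by (rule theI')
  then show "hom C \<zero>\<^bsub>X,Y\<^esub> X Y" "zero_mor C \<zero>\<^bsub>X,Y\<^esub>"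
    by auto
qed

lemma dom_zero [simp]: "sdom C \<zero>\<^bsub>X,Y\<^esub> = X"
  and cod_zero [simp]: "scod C \<zero>\<^bsub>X,Y\<^esub> = Y"
  using hom_zero unfolding hom_def by auto

lemma zero_mor_iff: "hom C f X Y \<Longrightarrow> zero_mor C f \<longleftrightarrow> f = \<zero>\<^bsub>X,Y\<^esub>"
  using zero_mor_unique[of f "\<zero>\<^bsub>X,Y\<^esub>"] zero_mor_zero by auto

lemma zero_mor_comp:
  assumes "zero_mor C f" "hom C k A X" "hom C f X Y" "hom C l Y B"
  shows "zero_mor C (l \<odot> f \<odot> k)"
proof -
  obtain Z g h where "zero_obj C Z" "hom C g X Z" "hom C h Z Y" "f = h \<odot> g"
    using assms(1,3) by (rule zero_morE)
  moreover have "l \<odot> (h \<odot> g) \<odot> k = (l \<odot> h) \<odot> (g \<odot> k)"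
    using calculation assms by (simp add: cat_simps)
  ultimately show ?thesis
    using assms by (metis hom_comp zero_morI)
qed

lemma zero_mor_adj:
  assumes "zero_mor C f" "hom C f X Y"
  shows "zero_mor C f\<^sup>\<dagger>"
proof -
  obtain Z g h where "zero_obj C Z" "hom C g X Z" "hom C h Z Y" "f = h \<odot> g"
    using assms by (rule zero_morE)
  then show ?thesis
    by (metis adj_comp hom_adj hom_def zero_morI)
qed

lemma zero_comp [cat_simps]: "scod C f = X \<Longrightarrow> \<zero>\<^bsub>X,Y\<^esub> \<odot> f = \<zero>\<^bsub>sdom C f,Y\<^esub>"
  using zero_mor_comp[OF zero_mor_zero, where k = f and A = "sdom C f" and l = "\<one>\<^bsub>Y\<^esub>"]
    zero_mor_iff[of "\<zero>\<^bsub>X,Y\<^esub> \<odot> f" "sdom C f" Y]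
  by (simp add: cat_simps)

lemma comp_zero [cat_simps]: "sdom C k = Y \<Longrightarrow> k \<odot> \<zero>\<^bsub>X,Y\<^esub> = \<zero>\<^bsub>X,scod C k\<^esub>"
  using zero_mor_comp[OF zero_mor_zero, where k = "\<one>\<^bsub>X\<^esub>" and l = k and B = "scod C k"]
    zero_mor_iff[of "k \<odot> \<zero>\<^bsub>X,Y\<^esub>" X "scod C k"]
  by (simp add: cat_simps)

lemma adj_zero [simp]: "\<zero>\<^bsub>X,Y\<^esub>\<^sup>\<dagger> = \<zero>\<^bsub>Y,X\<^esub>"
  using zero_mor_adj[OF zero_mor_zero hom_zero] zero_mor_iff[of "\<zero>\<^bsub>X,Y\<^esub>\<^sup>\<dagger>" Y X] by auto

section \<open>Biproducts\<close>

lemma obtain_orthonormal_biproduct: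
  obtains P s1 s2 where "biproduct C X1 X2 P s1 s1\<^sup>\<dagger> s2 s2\<^sup>\<dagger>"
  using pre_hilbert unfolding pre_hilbert_def orthonormal_biproduct_def by blast

context
  fixes X1 X2 P s1 r1 s2 r2
  assumes bp: "biproduct C X1 X2 P s1 r1 s2 r2"
begin

lemma bp_homs: "hom C s1 X1 P" "hom C r1 P X1" "hom C s2 X2 P" "hom C r2 P X2"
  using bp unfolding biproduct_def by auto

lemma bp_retractions: "r1 \<odot> s1 = \<one>\<^bsub>X1\<^esub>" "r2 \<odot> s2 = \<one>\<^bsub>X2\<^esub>"
  using bp unfolding biproduct_def by auto

lemma bp_orthogonal: "r1 \<odot> s2 = \<zero>\<^bsub>X2,X1\<^esub>" "r2 \<odot> s1 = \<zero>\<^bsub>X1,X2\<^esub>"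
  using bp zero_mor_iff hom_comp[OF bp_homs(3,2)] hom_comp[OF bp_homs(1,4)]
  unfolding biproduct_def by auto

lemma bp_tuple_unique:
  assumes "hom C f A X1" "hom C g A X2"
  shows "\<exists>!h. hom C h A P \<and> r1 \<odot> h = f \<and> r2 \<odot> h = g"
proof -
  have "\<forall>A f g. hom C f A X1 \<and> hom C g A X2 \<longrightarrow>
      (\<exists>!h. hom C h A P \<and> r1 \<odot> h = f \<and> r2 \<odot> h = g)"
    using bp unfolding biproduct_def by (elim conjE)
  then show ?thesis
    using assms by blast
qed

lemma bp_cotuple_unique:
  assumes "hom C f X1 A" "hom C g X2 A"
  shows "\<exists>!h. hom C h P A \<and> h \<odot> s1 = f \<and> h \<odot> s2 = g"
proof -
  have "\<forall>A f g. hom C f X1 A \<and> hom C g X2 A \<longrightarrow>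
      (\<exists>!h. hom C h P A \<and> h \<odot> s1 = f \<and> h \<odot> s2 = g)"
    using bp unfolding biproduct_def by (elim conjE)
  then show ?thesis
    using assms by blast
qed

lemma bp_tuple_ex:
  assumes "hom C f A X1" "hom C g A X2"
  obtains h where "hom C h A P" "r1 \<odot> h = f" "r2 \<odot> h = g"
  using bp_tuple_unique[OF assms] by blast

lemma bp_cotuple_ex:
  assumes "hom C f X1 A" "hom C g X2 A"
  obtains h where "hom C h P A" "h \<odot> s1 = f" "h \<odot> s2 = g"
  using bp_cotuple_unique[OF assms] by blast

lemma bp_tuple_eqI:
  assumes "hom C h A P" "hom C h' A P" "r1 \<odot> h = r1 \<odot> h'" "r2 \<odot> h = r2 \<odot> h'"
  shows "h = h'"
  using bp_tuple_unique[OF hom_comp[OF assms(1) bp_homs(2)] hom_comp[OF assms(1) bp_homs(4)]] assms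
  by (elim ex1E) (metis)

lemma bp_cotuple_eqI:
  assumes "hom C h P A" "hom C h' P A" "h \<odot> s1 = h' \<odot> s1" "h \<odot> s2 = h' \<odot> s2"
  shows "h = h'"
  using bp_cotuple_unique[OF hom_comp[OF bp_homs(1) assms(1)] hom_comp[OF bp_homs(3) assms(1)]] assms
  by (elim ex1E) (metis)

lemma biproduct_swap: "biproduct C X2 X1 P s2 r2 s1 r1"
  unfolding biproduct_def
proof (intro conjI allI impI)
  fix A f g
  assume "hom C f A X2 \<and> hom C g A X1"
  then show "\<exists>!h. hom C h A P \<and> r2 \<odot> h = f \<and> r1 \<odot> h = g"
    by (metis bp_tuple_ex bp_tuple_eqI)
next
  fix A f g
  assume "hom C f X2 A \<and> hom C g X1 A"
  then show "\<exists>!h. hom C h P A \<and> h \<odot> s2 = f \<and> h \<odot> s1 = g"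
    by (metis bp_cotuple_ex bp_cotuple_eqI)
qed (use bp_homs bp_retractions bp_orthogonal zero_mor_zero in auto)

end

section \<open>Addition of parallel morphisms\<close>

abbreviation hadd (infixl "\<boxplus>" 65) where "f \<boxplus> g \<equiv> madd C f g"

lemma is_sum_unique:
  assumes f: "hom C f A B" and g: "hom C g A B"
    and bp: "biproduct C B B P s1 r1 s2 r2"
    and u: "hom C u A P" "r1 \<odot> u = f" "r2 \<odot> u = g"
    and v: "hom C v P B" "v \<odot> s1 = \<one>\<^bsub>B\<^esub>" "v \<odot> s2 = \<one>\<^bsub>B\<^esub>"
    and sum: "is_sum C f g h"
  shows "h = v \<odot> u"
proof -
  obtain P' s1' r1' s2' r2' u' v' where bp': "biproduct C B B P' s1' r1' s2' r2'"
    and u': "hom C u' A P'" "r1' \<odot> u' = f" "r2' \<odot> u' = g"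
    and v': "hom C v' P' B" "v' \<odot> s1' = \<one>\<^bsub>B\<^esub>" "v' \<odot> s2' = \<one>\<^bsub>B\<^esub>"
    and h: "h = v' \<odot> u'"
    using sum f unfolding is_sum_def hom_def by auto
  note homs = bp_homs[OF bp] bp_homs[OF bp']
  note eqs = bp_retractions[OF bp] bp_orthogonal[OF bp] bp_retractions[OF bp'] bp_orthogonal[OF bp']
  obtain \<theta> where \<theta>: "hom C \<theta> P P'" "r1' \<odot> \<theta> = r1" "r2' \<odot> \<theta> = r2"
    using bp_tuple_ex[OF bp' homs(2,4)] .
  have \<theta>_comp: "\<theta> \<odot> x = x'"
    if x: "hom C x X P" "hom C x' X P'" "r1 \<odot> x = r1' \<odot> x'" "r2 \<odot> x = r2' \<odot> x'" for x x' X
  proof (rule bp_tuple_eqI[OF bp' hom_comp[OF x(1) \<theta>(1)] x(2)])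
    show "r1' \<odot> \<theta> \<odot> x = r1' \<odot> x'" "r2' \<odot> \<theta> \<odot> x = r2' \<odot> x'"
      using comp_reduce[OF \<theta>(2), of x] comp_reduce[OF \<theta>(3), of x] x \<theta> homs
      by (simp_all add: hom_def)
  qed
  have \<theta>_s: "\<theta> \<odot> s1 = s1'" "\<theta> \<odot> s2 = s2'"
    by (rule \<theta>_comp[OF homs(1,5)] \<theta>_comp[OF homs(3,7)], simp_all add: eqs)+
  have \<theta>_u: "\<theta> \<odot> u = u'"
    by (rule \<theta>_comp[OF u(1) u'(1)]) (simp_all add: u u')
  have "v' \<odot> \<theta> = v"
  proof (rule bp_cotuple_eqI[OF bp hom_comp[OF \<theta>(1) v'(1)] v(1)])
    show "(v' \<odot> \<theta>) \<odot> s1 = v \<odot> s1" "(v' \<odot> \<theta>) \<odot> s2 = v \<odot> s2"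
      using \<theta> v v' homs \<theta>_s by (simp_all add: cat_simps)
  qed
  moreover have "h = (v' \<odot> \<theta>) \<odot> u"
    using h \<theta> u v' by (simp add: cat_simps flip: \<theta>_u)
  ultimately show ?thesis
    by simp
qed

lemma madd_eq:
  assumes "hom C f A B" "hom C g A B" "biproduct C B B P s1 r1 s2 r2"
    and "hom C u A P" "r1 \<odot> u = f" "r2 \<odot> u = g"
    and "hom C v P B" "v \<odot> s1 = \<one>\<^bsub>B\<^esub>" "v \<odot> s2 = \<one>\<^bsub>B\<^esub>"
  shows "f \<boxplus> g = v \<odot> u"
  unfolding madd_def
proof (rule the_equality)
  show "is_sum C f g (v \<odot> u)"
    unfolding is_sum_def using assms by (intro exI conjI) (assumption | rule refl)+
  show "\<And>h. is_sum C f g h \<Longrightarrow> h = v \<odot> u"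
    by (rule is_sum_unique[OF assms])
qed

lemma madd_decomp:
  assumes f: "hom C f A B" and g: "hom C g A B"
  obtains P s1 s2 u v where "biproduct C B B P s1 s1\<^sup>\<dagger> s2 s2\<^sup>\<dagger>"
    "hom C u A P" "s1\<^sup>\<dagger> \<odot> u = f" "s2\<^sup>\<dagger> \<odot> u = g"
    "hom C v P B" "v \<odot> s1 = \<one>\<^bsub>B\<^esub>" "v \<odot> s2 = \<one>\<^bsub>B\<^esub>" "f \<boxplus> g = v \<odot> u"
proof -
  obtain P s1 s2 where bp: "biproduct C B B P s1 s1\<^sup>\<dagger> s2 s2\<^sup>\<dagger>"
    by (rule obtain_orthonormal_biproduct)
  obtain u where u: "hom C u A P" "s1\<^sup>\<dagger> \<odot> u = f" "s2\<^sup>\<dagger> \<odot> u = g"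
    using bp_tuple_ex[OF bp f g] .
  obtain v where v: "hom C v P B" "v \<odot> s1 = \<one>\<^bsub>B\<^esub>" "v \<odot> s2 = \<one>\<^bsub>B\<^esub>"
    using bp_cotuple_ex[OF bp hom_id hom_id] .
  show ?thesis
    using that[OF bp u v madd_eq[OF f g bp u v]] .
qed

lemma hom_madd [intro]:
  assumes "hom C f A B" "hom C g A B"
  shows "hom C (f \<boxplus> g) A B"
proof -
  obtain P s1 s2 u v where "hom C u A P" "hom C v P B" "f \<boxplus> g = v \<odot> u"
    using madd_decomp[OF assms] by metis
  then show ?thesis
    by (simp add: hom_comp)
qed

lemma madd_eq_cotuple_comp_diagonal:
  assumes f: "hom C f A B" and g: "hom C g A B"
    and bp: "biproduct C A A Q t1 q1 t2 q2"
    and d: "hom C d A Q" "q1 \<odot> d = \<one>\<^bsub>A\<^esub>" "q2 \<odot> d = \<one>\<^bsub>A\<^esub>"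
    and c: "hom C c Q B" "c \<odot> t1 = f" "c \<odot> t2 = g"
  shows "f \<boxplus> g = c \<odot> d"
proof -
  obtain P s1 s2 u v where bpB: "biproduct C B B P s1 s1\<^sup>\<dagger> s2 s2\<^sup>\<dagger>"
    and u: "hom C u A P" "s1\<^sup>\<dagger> \<odot> u = f" "s2\<^sup>\<dagger> \<odot> u = g"
    and v: "hom C v P B" "v \<odot> s1 = \<one>\<^bsub>B\<^esub>" "v \<odot> s2 = \<one>\<^bsub>B\<^esub>"
    and sum: "f \<boxplus> g = v \<odot> u"
    by (rule madd_decomp[OF f g])
  note homs = bp_homs[OF bp] bp_homs[OF bpB]
  note eqs = bp_retractions[OF bp] bp_orthogonal[OF bp] bp_retractions[OF bpB] bp_orthogonal[OF bpB]
  obtain m where m: "hom C m Q P" "s1\<^sup>\<dagger> \<odot> m = f \<odot> q1" "s2\<^sup>\<dagger> \<odot> m = g \<odot> q2"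
    using bp_tuple_ex[OF bpB hom_comp[OF homs(2) f] hom_comp[OF homs(4) g]] .
  have md: "m \<odot> d = u"
  proof (rule bp_tuple_eqI[OF bpB hom_comp[OF d(1) m(1)] u(1)])
    show "s1\<^sup>\<dagger> \<odot> m \<odot> d = s1\<^sup>\<dagger> \<odot> u" "s2\<^sup>\<dagger> \<odot> m \<odot> d = s2\<^sup>\<dagger> \<odot> u"
      using comp_reduce[OF m(2), of d] comp_reduce[OF m(3), of d] m d u f g homs
      by (simp_all add: cat_simps)
  qed
  have vm: "v \<odot> m = c"
  proof (rule bp_cotuple_eqI[OF bp hom_comp[OF m(1) v(1)] c(1)])
    have "m \<odot> t1 = s1 \<odot> f"
      by (rule bp_tuple_eqI[OF bpB hom_comp[OF homs(1) m(1)] hom_comp[OF f homs(5)]])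
        (use comp_reduce[OF m(2), of t1] comp_reduce[OF m(3), of t1] comp_reduce[OF eqs(5), of f]
          comp_reduce[OF eqs(8), of f] m f g homs eqs in \<open>simp_all add: cat_simps\<close>)
    moreover have "m \<odot> t2 = s2 \<odot> g"
      by (rule bp_tuple_eqI[OF bpB hom_comp[OF homs(3) m(1)] hom_comp[OF g homs(7)]])
        (use comp_reduce[OF m(2), of t2] comp_reduce[OF m(3), of t2] comp_reduce[OF eqs(6), of g]
          comp_reduce[OF eqs(7), of g] m f g homs eqs in \<open>simp_all add: cat_simps\<close>)
    ultimately
    show "(v \<odot> m) \<odot> t1 = c \<odot> t1" "(v \<odot> m) \<odot> t2 = c \<odot> t2"
      using comp_reduce[OF v(2), of f] comp_reduce[OF v(3), of g] m v c f g homs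
      by (simp_all add: cat_simps)
  qed
  have "c \<odot> d = v \<odot> (m \<odot> d)"
    using d m v by (simp add: cat_simps flip: vm)
  then show ?thesis
    using sum md by simp
qed

lemma comp_madd:
  assumes f: "hom C f A B" and g: "hom C g A B" and k: "hom C k B D"
  shows "k \<odot> (f \<boxplus> g) = k \<odot> f \<boxplus> k \<odot> g"
proof -
  obtain Q t1 t2 where bp: "biproduct C A A Q t1 t1\<^sup>\<dagger> t2 t2\<^sup>\<dagger>"
    by (rule obtain_orthonormal_biproduct)
  obtain d where d: "hom C d A Q" "t1\<^sup>\<dagger> \<odot> d = \<one>\<^bsub>A\<^esub>" "t2\<^sup>\<dagger> \<odot> d = \<one>\<^bsub>A\<^esub>"
    using bp_tuple_ex[OF bp hom_id hom_id] .
  obtain c where c: "hom C c Q B" "c \<odot> t1 = f" "c \<odot> t2 = g"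
    using bp_cotuple_ex[OF bp f g] .
  have "k \<odot> f \<boxplus> k \<odot> g = (k \<odot> c) \<odot> d"
    using c k bp_homs[OF bp]
    by (intro madd_eq_cotuple_comp_diagonal[OF _ _ bp d]) (auto simp: cat_simps)
  then show ?thesis
    using madd_eq_cotuple_comp_diagonal[OF f g bp d c] c d k by (simp add: cat_simps)
qed

lemma madd_comp:
  assumes f: "hom C f A B" and g: "hom C g A B" and h: "hom C h A' A"
  shows "(f \<boxplus> g) \<odot> h = f \<odot> h \<boxplus> g \<odot> h"
proof -
  obtain P s1 s2 u v where bp: "biproduct C B B P s1 s1\<^sup>\<dagger> s2 s2\<^sup>\<dagger>"
    and u: "hom C u A P" "s1\<^sup>\<dagger> \<odot> u = f" "s2\<^sup>\<dagger> \<odot> u = g"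
    and v: "hom C v P B" "v \<odot> s1 = \<one>\<^bsub>B\<^esub>" "v \<odot> s2 = \<one>\<^bsub>B\<^esub>"
    and sum: "f \<boxplus> g = v \<odot> u"
    by (rule madd_decomp[OF f g])
  have "f \<odot> h \<boxplus> g \<odot> h = v \<odot> (u \<odot> h)"
    using comp_reduce[OF u(2), of h] comp_reduce[OF u(3), of h] f g h u bp_homs[OF bp]
    by (intro madd_eq[OF _ _ bp _ _ _ v]) (auto simp: cat_simps)
  then show ?thesis
    using sum u v h by (simp add: cat_simps)
qed

lemma madd_commute:
  assumes f: "hom C f A B" and g: "hom C g A B"
  shows "f \<boxplus> g = g \<boxplus> f"
proof -
  obtain P s1 s2 u v where bp: "biproduct C B B P s1 s1\<^sup>\<dagger> s2 s2\<^sup>\<dagger>"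
    and u: "hom C u A P" "s1\<^sup>\<dagger> \<odot> u = f" "s2\<^sup>\<dagger> \<odot> u = g"
    and v: "hom C v P B" "v \<odot> s1 = \<one>\<^bsub>B\<^esub>" "v \<odot> s2 = \<one>\<^bsub>B\<^esub>"
    and sum: "f \<boxplus> g = v \<odot> u"
    by (rule madd_decomp[OF f g])
  show ?thesis
    using madd_eq[OF g f biproduct_swap[OF bp] u(1,3,2) v(1,3,2)] sum by simp
qed

lemma madd_zero_right [simp]:
  assumes f: "hom C f A B"
  shows "f \<boxplus> \<zero>\<^bsub>A,B\<^esub> = f"
proof -
  obtain P s1 s2 where bp: "biproduct C B B P s1 s1\<^sup>\<dagger> s2 s2\<^sup>\<dagger>"
    by (rule obtain_orthonormal_biproduct)
  note homs = bp_homs[OF bp] and eqs = bp_retractions[OF bp] bp_orthogonal[OF bp]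
  obtain v where v: "hom C v P B" "v \<odot> s1 = \<one>\<^bsub>B\<^esub>" "v \<odot> s2 = \<one>\<^bsub>B\<^esub>"
    using bp_cotuple_ex[OF bp hom_id hom_id] .
  have "f \<boxplus> \<zero>\<^bsub>A,B\<^esub> = v \<odot> (s1 \<odot> f)"
    using comp_reduce[OF eqs(1), of f] comp_reduce[OF eqs(4), of f] f homs
    by (intro madd_eq[OF f hom_zero bp _ _ _ v]) (auto simp: cat_simps)
  then show ?thesis
    using comp_reduce[OF v(2), of f] f v homs by (simp add: cat_simps)
qed

lemma madd_zero_left [simp]: "hom C f A B \<Longrightarrow> \<zero>\<^bsub>A,B\<^esub> \<boxplus> f = f"
  using madd_commute[OF hom_zero] by simp

lemma madd_assoc:
  assumes f: "hom C f A B" and g: "hom C g A B" and h: "hom C h A B"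
  shows "(f \<boxplus> g) \<boxplus> h = f \<boxplus> (g \<boxplus> h)"
proof -
  obtain P s1 s2 where bp: "biproduct C B B P s1 s1\<^sup>\<dagger> s2 s2\<^sup>\<dagger>"
    by (rule obtain_orthonormal_biproduct)
  note homs = bp_homs[OF bp]
  obtain v where v: "hom C v P B" "v \<odot> s1 = \<one>\<^bsub>B\<^esub>" "v \<odot> s2 = \<one>\<^bsub>B\<^esub>"
    using bp_cotuple_ex[OF bp hom_id hom_id] .
  obtain x where x: "hom C x A P" "s1\<^sup>\<dagger> \<odot> x = f" "s2\<^sup>\<dagger> \<odot> x = g"
    using bp_tuple_ex[OF bp f g] .
  obtain y where y: "hom C y A P" "s1\<^sup>\<dagger> \<odot> y = \<zero>\<^bsub>A,B\<^esub>" "s2\<^sup>\<dagger> \<odot> y = h"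
    using bp_tuple_ex[OF bp hom_zero h] .
  have fg: "f \<boxplus> g = v \<odot> x"
    by (rule madd_eq[OF f g bp x v])
  have "\<zero>\<^bsub>A,B\<^esub> \<boxplus> h = v \<odot> y"
    by (rule madd_eq[OF hom_zero h bp y v])
  then have h_eq: "h = v \<odot> y"
    using h by simp
  have "f \<boxplus> (g \<boxplus> h) = v \<odot> (x \<boxplus> y)"
  proof (rule madd_eq[OF f _ bp _ _ _ v])
    show "s1\<^sup>\<dagger> \<odot> (x \<boxplus> y) = f" "s2\<^sup>\<dagger> \<odot> (x \<boxplus> y) = g \<boxplus> h"
      using comp_madd[OF x(1) y(1) homs(2)] comp_madd[OF x(1) y(1) homs(4)] x y f by simp_all
  qed (use g h x y in auto)
  also have "\<dots> = (f \<boxplus> g) \<boxplus> h"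
    using comp_madd[OF x(1) y(1) v(1)] fg h_eq by simp
  finally show ?thesis
    by simp
qed

lemma madd_interchange:
  assumes "hom C a A B" "hom C b A B" "hom C c A B" "hom C d A B"
  shows "(a \<boxplus> b) \<boxplus> (c \<boxplus> d) = (a \<boxplus> c) \<boxplus> (b \<boxplus> d)"
proof -
  have "b \<boxplus> (c \<boxplus> d) = (b \<boxplus> c) \<boxplus> d"
    using madd_assoc[OF assms(2,3,4)] by simp
  also have "\<dots> = (c \<boxplus> b) \<boxplus> d"
    using madd_commute[OF assms(2,3)] by simp
  also have "\<dots> = c \<boxplus> (b \<boxplus> d)"
    using madd_assoc[OF assms(3,2,4)] .
  finally show ?thesis
    using assms by (simp add: madd_assoc hom_madd)
qed

lemma biproduct_id_eq_madd:
  assumes bp: "biproduct C X1 X2 P s1 r1 s2 r2"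
  shows "s1 \<odot> r1 \<boxplus> s2 \<odot> r2 = \<one>\<^bsub>P\<^esub>"
proof -
  note homs = bp_homs[OF bp] and eqs = bp_retractions[OF bp] bp_orthogonal[OF bp]
  have sr: "hom C (s1 \<odot> r1) P P" "hom C (s2 \<odot> r2) P P"
    using homs by auto
  show ?thesis
  proof (rule bp_tuple_eqI[OF bp hom_madd[OF sr] hom_id])
    show "r1 \<odot> (s1 \<odot> r1 \<boxplus> s2 \<odot> r2) = r1 \<odot> \<one>\<^bsub>P\<^esub>" "r2 \<odot> (s1 \<odot> r1 \<boxplus> s2 \<odot> r2) = r2 \<odot> \<one>\<^bsub>P\<^esub>"
      using comp_madd[OF sr homs(2)] comp_madd[OF sr homs(4)] homs
        comp_reduce[OF eqs(1)] comp_reduce[OF eqs(2)] comp_reduce[OF eqs(3)] comp_reduce[OF eqs(4)]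
      by (simp_all add: cat_simps)
  qed
qed

lemma cotuple_comp_tuple:
  assumes bp: "biproduct C X1 X2 P s1 r1 s2 r2"
    and a: "hom C a A X1" and b: "hom C b A X2"
    and h: "hom C h A P" "r1 \<odot> h = a" "r2 \<odot> h = b"
    and k: "hom C k P B" "k \<odot> s1 = p" "k \<odot> s2 = q"
  shows "k \<odot> h = p \<odot> a \<boxplus> q \<odot> b"
proof -
  note homs = bp_homs[OF bp]
  have sr: "hom C (s1 \<odot> r1) P P" "hom C (s2 \<odot> r2) P P"
    using homs by auto
  have "h = (s1 \<odot> r1 \<boxplus> s2 \<odot> r2) \<odot> h"
    using biproduct_id_eq_madd[OF bp] h by (simp add: cat_simps)
  also have "\<dots> = s1 \<odot> a \<boxplus> s2 \<odot> b"
    using madd_comp[OF sr h(1)] h homs by (simp add: cat_simps)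
  finally show ?thesis
    using comp_madd[OF hom_comp[OF a homs(1)] hom_comp[OF b homs(3)] k(1)]
      comp_reduce[OF k(2), of a] comp_reduce[OF k(3), of b] a b k homs
    by (simp add: hom_def)
qed

lemma adj_madd:
  assumes f: "hom C f A B" and g: "hom C g A B"
  shows "(f \<boxplus> g)\<^sup>\<dagger> = f\<^sup>\<dagger> \<boxplus> g\<^sup>\<dagger>"
proof -
  obtain P s1 s2 u v where bp: "biproduct C B B P s1 s1\<^sup>\<dagger> s2 s2\<^sup>\<dagger>"
    and u: "hom C u A P" "s1\<^sup>\<dagger> \<odot> u = f" "s2\<^sup>\<dagger> \<odot> u = g"
    and v: "hom C v P B" "v \<odot> s1 = \<one>\<^bsub>B\<^esub>" "v \<odot> s2 = \<one>\<^bsub>B\<^esub>"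
    and sum: "f \<boxplus> g = v \<odot> u"
    by (rule madd_decomp[OF f g])
  note homs = bp_homs[OF bp]
  have "(f \<boxplus> g)\<^sup>\<dagger> = u\<^sup>\<dagger> \<odot> v\<^sup>\<dagger>"
    using sum u v by (simp add: cat_simps)
  also have "\<dots> = f\<^sup>\<dagger> \<odot> \<one>\<^bsub>B\<^esub> \<boxplus> g\<^sup>\<dagger> \<odot> \<one>\<^bsub>B\<^esub>"
  proof (rule cotuple_comp_tuple[OF bp hom_id hom_id hom_adj[OF v(1)] _ _ hom_adj[OF u(1)]])
    show "s1\<^sup>\<dagger> \<odot> v\<^sup>\<dagger> = \<one>\<^bsub>B\<^esub>" "s2\<^sup>\<dagger> \<odot> v\<^sup>\<dagger> = \<one>\<^bsub>B\<^esub>"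
      using adj_comp[of v s1] adj_comp[of v s2] v homs by (simp_all add: hom_def)
    show "u\<^sup>\<dagger> \<odot> s1 = f\<^sup>\<dagger>" "u\<^sup>\<dagger> \<odot> s2 = g\<^sup>\<dagger>"
      using adj_comp[of "s1\<^sup>\<dagger>" u] adj_comp[of "s2\<^sup>\<dagger>" u] u homs by (simp_all add: hom_def)
  qed
  also have "\<dots> = f\<^sup>\<dagger> \<boxplus> g\<^sup>\<dagger>"
    using f g by (simp add: cat_simps)
  finally show ?thesis .
qed

lemma adj_comp_tuple:
  assumes bp: "biproduct C X1 X2 P s1 s1\<^sup>\<dagger> s2 s2\<^sup>\<dagger>" and h: "hom C h A P"
  shows "h\<^sup>\<dagger> \<odot> h = (s1\<^sup>\<dagger> \<odot> h)\<^sup>\<dagger> \<odot> (s1\<^sup>\<dagger> \<odot> h) \<boxplus> (s2\<^sup>\<dagger> \<odot> h)\<^sup>\<dagger> \<odot> (s2\<^sup>\<dagger> \<odot> h)"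
  using bp_homs[OF bp] h
  by (intro cotuple_comp_tuple[OF bp]) (auto simp: cat_simps)

lemma adj_madd_comp_madd:
  assumes a: "hom C a A B" and b: "hom C b A B"
  shows "(a \<boxplus> b)\<^sup>\<dagger> \<odot> (a \<boxplus> b) = (a\<^sup>\<dagger> \<odot> a \<boxplus> b\<^sup>\<dagger> \<odot> b) \<boxplus> (a\<^sup>\<dagger> \<odot> b \<boxplus> b\<^sup>\<dagger> \<odot> a)"
proof -
  have homs: "hom C (a\<^sup>\<dagger> \<odot> a) A A" "hom C (a\<^sup>\<dagger> \<odot> b) A A" "hom C (b\<^sup>\<dagger> \<odot> a) A A" "hom C (b\<^sup>\<dagger> \<odot> b) A A"
    using a b by auto
  have "(a \<boxplus> b)\<^sup>\<dagger> \<odot> (a \<boxplus> b) = (a\<^sup>\<dagger> \<boxplus> b\<^sup>\<dagger>) \<odot> (a \<boxplus> b)"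
    using adj_madd[OF a b] by simp
  also have "\<dots> = (a\<^sup>\<dagger> \<odot> a \<boxplus> a\<^sup>\<dagger> \<odot> b) \<boxplus> (b\<^sup>\<dagger> \<odot> b \<boxplus> b\<^sup>\<dagger> \<odot> a)"
    using madd_comp[OF hom_adj[OF a] hom_adj[OF b] hom_madd[OF a b]]
      comp_madd[OF a b hom_adj[OF a]] comp_madd[OF a b hom_adj[OF b]] madd_commute[OF homs(3,4)]
    by simp
  also have "\<dots> = (a\<^sup>\<dagger> \<odot> a \<boxplus> b\<^sup>\<dagger> \<odot> b) \<boxplus> (a\<^sup>\<dagger> \<odot> b \<boxplus> b\<^sup>\<dagger> \<odot> a)"
    by (rule madd_interchange[OF homs(1,2,4,3)])
  finally show ?thesis .
qed

section \<open>Additive inverses\<close>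

lemma isometric_kernel_ex: "\<exists>k. is_kernel C k f \<and> isometry C k"
  using pre_hilbert unfolding pre_hilbert_def by blast

lemma diagonal_is_kernel:
  assumes "biproduct C X X P s1 s1\<^sup>\<dagger> s2 s2\<^sup>\<dagger>"
    and "hom C d X P" "s1\<^sup>\<dagger> \<odot> d = \<one>\<^bsub>X\<^esub>" "s2\<^sup>\<dagger> \<odot> d = \<one>\<^bsub>X\<^esub>"
  shows "\<exists>g. is_kernel C d g"
proof -
  have "\<forall>X P s1 r1 s2 r2 d. orthonormal_biproduct C X X P s1 r1 s2 r2 \<and> hom C d X P \<and>
      r1 \<odot> d = \<one>\<^bsub>X\<^esub> \<and> r2 \<odot> d = \<one>\<^bsub>X\<^esub> \<longrightarrow> (\<exists>g. is_kernel C d g)"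
    using pre_hilbert unfolding pre_hilbert_def by (elim conjE)
  moreover have "orthonormal_biproduct C X X P s1 s1\<^sup>\<dagger> s2 s2\<^sup>\<dagger>"
    using assms(1) unfolding orthonormal_biproduct_def by simp
  ultimately show ?thesis
    using assms(2-4) by blast
qed

lemma kernel_cod: "is_kernel C k f \<Longrightarrow> scod C k = sdom C f"
  unfolding is_kernel_def by simp

lemma kernel_comp:
  assumes "is_kernel C k f"
  shows "f \<odot> k = \<zero>\<^bsub>sdom C k,scod C f\<^esub>"
  using assms zero_mor_iff[of "f \<odot> k" "sdom C k" "scod C f"]
  unfolding is_kernel_def by (simp add: cat_simps)

lemma kernel_factor:
  assumes "is_kernel C k f" "hom C t A (sdom C f)" "f \<odot> t = \<zero>\<^bsub>A,scod C f\<^esub>"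
  obtains h where "hom C h A (sdom C k)" "k \<odot> h = t"
proof -
  have "\<forall>g. scod C g = sdom C f \<and> zero_mor C (f \<odot> g) \<longrightarrow>
      (\<exists>!h. hom C h (sdom C g) (sdom C k) \<and> k \<odot> h = g)"
    using assms(1) unfolding is_kernel_def by (elim conjE)
  moreover have "scod C t = sdom C f" "sdom C t = A" "zero_mor C (f \<odot> t)"
    using assms(2,3) zero_mor_zero by (simp_all add: hom_def)
  ultimately have "\<exists>!h. hom C h A (sdom C k) \<and> k \<odot> h = t"
    by metis
  then show ?thesis
    using that by blast
qed

context
  fixes X P s1 s2 d g l
  assumes bp: "biproduct C X X P s1 s1\<^sup>\<dagger> s2 s2\<^sup>\<dagger>"
    and diag: "hom C d X P" "s1\<^sup>\<dagger> \<odot> d = \<one>\<^bsub>X\<^esub>" "s2\<^sup>\<dagger> \<odot> d = \<one>\<^bsub>X\<^esub>"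
    and kernel_d: "is_kernel C d g"
    and kernel_l: "is_kernel C l d\<^sup>\<dagger>"
    and isometry_l: "isometry C l"
begin

lemma hom_l: "hom C l (sdom C l) P"
  using kernel_cod[OF kernel_l] diag(1) by (simp add: hom_def)

lemma factor_through_diagonal:
  assumes t: "hom C t A P" "l\<^sup>\<dagger> \<odot> t = \<zero>\<^bsub>A,sdom C l\<^esub>"
  obtains u where "hom C u A X" "d \<odot> u = t"
proof -
  define Y where "Y = scod C g"
  have g: "hom C g P Y"
    using kernel_cod[OF kernel_d] diag(1) by (simp add: hom_def Y_def)
  have "d\<^sup>\<dagger> \<odot> g\<^sup>\<dagger> = (g \<odot> d)\<^sup>\<dagger>"
    using g diag by (simp add: cat_simps)
  also have "\<dots> = \<zero>\<^bsub>Y,X\<^esub>"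
    using kernel_comp[OF kernel_d] g diag by (simp add: hom_def)
  finally obtain h where h: "hom C h Y (sdom C l)" "l \<odot> h = g\<^sup>\<dagger>"
    using kernel_factor[OF kernel_l, of "g\<^sup>\<dagger>" Y] g diag by (auto simp: hom_def)
  have "g = (l \<odot> h)\<^sup>\<dagger>"
    using h(2) by simp
  also have "\<dots> = h\<^sup>\<dagger> \<odot> l\<^sup>\<dagger>"
    using h(1) hom_l by (simp add: cat_simps)
  finally have "g \<odot> t = h\<^sup>\<dagger> \<odot> (l\<^sup>\<dagger> \<odot> t)"
    using t h(1) hom_l by (simp add: cat_simps)
  then have "g \<odot> t = \<zero>\<^bsub>A,Y\<^esub>"
    using t h hom_l by (simp add: cat_simps)
  then show ?thesis
    using kernel_factor[OF kernel_d, of t A] t g diag that by (auto simp: hom_def)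
qed

lemma kernel_codiagonal_components:
  "s1\<^sup>\<dagger> \<odot> l \<boxplus> s2\<^sup>\<dagger> \<odot> l = \<zero>\<^bsub>sdom C l,X\<^esub>"
  "(s1\<^sup>\<dagger> \<odot> l)\<^sup>\<dagger> \<odot> (s1\<^sup>\<dagger> \<odot> l) \<boxplus> (s2\<^sup>\<dagger> \<odot> l)\<^sup>\<dagger> \<odot> (s2\<^sup>\<dagger> \<odot> l) = \<one>\<^bsub>sdom C l\<^esub>"
proof -
  note homs = bp_homs[OF bp]
  have "d\<^sup>\<dagger> \<odot> s1 = \<one>\<^bsub>X\<^esub>" "d\<^sup>\<dagger> \<odot> s2 = \<one>\<^bsub>X\<^esub>"
    using adj_comp[of "s1\<^sup>\<dagger>" d] adj_comp[of "s2\<^sup>\<dagger>" d] diag homs by (simp_all add: hom_def)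
  then have "s1\<^sup>\<dagger> \<odot> l \<boxplus> s2\<^sup>\<dagger> \<odot> l = d\<^sup>\<dagger> \<odot> l"
    using homs hom_l diag by (intro madd_eq[OF _ _ bp hom_l]) auto
  then show "s1\<^sup>\<dagger> \<odot> l \<boxplus> s2\<^sup>\<dagger> \<odot> l = \<zero>\<^bsub>sdom C l,X\<^esub>"
    using kernel_comp[OF kernel_l] diag(1) by (simp add: hom_def)
  show "(s1\<^sup>\<dagger> \<odot> l)\<^sup>\<dagger> \<odot> (s1\<^sup>\<dagger> \<odot> l) \<boxplus> (s2\<^sup>\<dagger> \<odot> l)\<^sup>\<dagger> \<odot> (s2\<^sup>\<dagger> \<odot> l) = \<one>\<^bsub>sdom C l\<^esub>"
    using adj_comp_tuple[OF bp hom_l] isometry_l unfolding isometry_def by metis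
qed

lemma kernel_codiagonal_neg_id:
  "\<exists>n. hom C n (sdom C l) (sdom C l) \<and> \<one>\<^bsub>sdom C l\<^esub> \<boxplus> n = \<zero>\<^bsub>sdom C l,sdom C l\<^esub>"
proof -
  define J c1 c2 where "J = sdom C l" and "c1 = s1\<^sup>\<dagger> \<odot> l" and "c2 = s2\<^sup>\<dagger> \<odot> l"
  have c: "hom C c1 J X" "hom C c2 J X"
    unfolding c1_def c2_def J_def using hom_l bp_homs[OF bp] by auto
  have "\<zero>\<^bsub>J,J\<^esub> = (c1 \<boxplus> c2)\<^sup>\<dagger> \<odot> (c1 \<boxplus> c2)"
    using kernel_codiagonal_components(1) by (simp add: c1_def c2_def J_def cat_simps)
  also have "\<dots> = \<one>\<^bsub>J\<^esub> \<boxplus> (c1\<^sup>\<dagger> \<odot> c2 \<boxplus> c2\<^sup>\<dagger> \<odot> c1)"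
    using adj_madd_comp_madd[OF c] kernel_codiagonal_components(2) by (simp add: c1_def c2_def J_def)
  finally have "\<one>\<^bsub>J\<^esub> \<boxplus> (c1\<^sup>\<dagger> \<odot> c2 \<boxplus> c2\<^sup>\<dagger> \<odot> c1) = \<zero>\<^bsub>J,J\<^esub>"
    by (rule sym)
  moreover have "hom C (c1\<^sup>\<dagger> \<odot> c2 \<boxplus> c2\<^sup>\<dagger> \<odot> c1) J J"
    using c by (intro hom_madd) auto
  ultimately show ?thesis
    unfolding J_def by blast
qed

lemma diagonal_components_agree:
  assumes m: "hom C m X (sdom C l)" "m \<boxplus> (s1\<^sup>\<dagger> \<odot> l)\<^sup>\<dagger> = \<zero>\<^bsub>X,sdom C l\<^esub>"
  shows "\<one>\<^bsub>X\<^esub> \<boxplus> (s1\<^sup>\<dagger> \<odot> l) \<odot> m = (s2\<^sup>\<dagger> \<odot> l) \<odot> m"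
proof -
  note homs = bp_homs[OF bp] and eqs = bp_retractions[OF bp] bp_orthogonal[OF bp]
  have lm: "hom C (l \<odot> m) X P"
    using hom_l m(1) by blast
  define t where "t = s1 \<boxplus> l \<odot> m"
  have t: "hom C t X P"
    unfolding t_def using homs lm by blast
  have "l\<^sup>\<dagger> \<odot> t = l\<^sup>\<dagger> \<odot> s1 \<boxplus> l\<^sup>\<dagger> \<odot> (l \<odot> m)"
    unfolding t_def using comp_madd[OF homs(1) lm hom_adj[OF hom_l]] .
  also have "\<dots> = (s1\<^sup>\<dagger> \<odot> l)\<^sup>\<dagger> \<boxplus> m"
  proof -
    have "l\<^sup>\<dagger> \<odot> s1 = (s1\<^sup>\<dagger> \<odot> l)\<^sup>\<dagger>"
      using adj_comp[of "s1\<^sup>\<dagger>" l] homs hom_l by (simp add: hom_def)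
    moreover have "l\<^sup>\<dagger> \<odot> (l \<odot> m) = (l\<^sup>\<dagger> \<odot> l) \<odot> m"
      using hom_l m(1) by (simp add: cat_simps)
    moreover have "(l\<^sup>\<dagger> \<odot> l) \<odot> m = m"
      using isometry_l m(1) by (simp add: isometry_def cat_simps)
    ultimately show ?thesis
      by simp
  qed
  also have "\<dots> = \<zero>\<^bsub>X,sdom C l\<^esub>"
    using madd_commute[OF hom_adj[OF hom_comp[OF hom_l homs(2)]] m(1)] m(2) by simp
  finally obtain u where u: "hom C u X X" "d \<odot> u = t"
    using factor_through_diagonal[OF t] by blast
  have "s1\<^sup>\<dagger> \<odot> t = s2\<^sup>\<dagger> \<odot> t"
    using comp_reduce[OF diag(2), of u] comp_reduce[OF diag(3), of u] u(1) diag homs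
    by (simp add: hom_def flip: u(2))
  moreover have "s1\<^sup>\<dagger> \<odot> t = \<one>\<^bsub>X\<^esub> \<boxplus> (s1\<^sup>\<dagger> \<odot> l) \<odot> m"
    unfolding t_def using comp_madd[OF homs(1) lm homs(2)] eqs homs hom_l m
    by (simp add: cat_simps)
  moreover have "s2\<^sup>\<dagger> \<odot> t = (s2\<^sup>\<dagger> \<odot> l) \<odot> m"
    unfolding t_def using comp_madd[OF homs(1) lm homs(4)] eqs homs hom_l m lm
    by (simp add: cat_simps)
  ultimately show ?thesis
    by simp
qed

lemma diagonal_neg_id: "\<exists>n. hom C n X X \<and> \<one>\<^bsub>X\<^esub> \<boxplus> n = \<zero>\<^bsub>X,X\<^esub>"
proof -
  define J c1 c2 where "J = sdom C l" and "c1 = s1\<^sup>\<dagger> \<odot> l" and "c2 = s2\<^sup>\<dagger> \<odot> l"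
  have c: "hom C c1 J X" "hom C c2 J X"
    unfolding c1_def c2_def J_def using hom_l bp_homs[OF bp] by auto
  obtain nJ where nJ: "hom C nJ J J" "\<one>\<^bsub>J\<^esub> \<boxplus> nJ = \<zero>\<^bsub>J,J\<^esub>"
    using kernel_codiagonal_neg_id unfolding J_def by blast
  define m where "m = nJ \<odot> c1\<^sup>\<dagger>"
  have m: "hom C m X J"
    unfolding m_def using nJ c by blast
  have "m \<boxplus> c1\<^sup>\<dagger> = (nJ \<boxplus> \<one>\<^bsub>J\<^esub>) \<odot> c1\<^sup>\<dagger>"
    unfolding m_def using madd_comp[OF nJ(1) hom_id hom_adj[OF c(1)]] c by (simp add: cat_simps)
  also have "\<dots> = \<zero>\<^bsub>X,J\<^esub>"
    using nJ c madd_commute[OF nJ(1) hom_id] by (simp add: cat_simps)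
  finally have m_c1: "m \<boxplus> c1\<^sup>\<dagger> = \<zero>\<^bsub>X,J\<^esub>" .
  have homs: "hom C (c1 \<odot> m) X X" "hom C (c2 \<odot> m) X X" "hom C (c1 \<odot> c1\<^sup>\<dagger>) X X" "hom C (c2 \<odot> c1\<^sup>\<dagger>) X X"
    using c m by auto
  have c1_m: "c1 \<odot> m \<boxplus> c1 \<odot> c1\<^sup>\<dagger> = \<zero>\<^bsub>X,X\<^esub>" and c2_m: "c2 \<odot> m \<boxplus> c2 \<odot> c1\<^sup>\<dagger> = \<zero>\<^bsub>X,X\<^esub>"
    using comp_madd[OF m hom_adj[OF c(1)] c(1)] comp_madd[OF m hom_adj[OF c(1)] c(2)] m_c1 c
    by (simp_all add: cat_simps)
  have "\<one>\<^bsub>X\<^esub> = (\<one>\<^bsub>X\<^esub> \<boxplus> c1 \<odot> m) \<boxplus> c1 \<odot> c1\<^sup>\<dagger>"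
    using c1_m madd_assoc[OF hom_id homs(1,3)] by simp
  also have "\<dots> = c2 \<odot> m \<boxplus> c1 \<odot> c1\<^sup>\<dagger>"
    using diagonal_components_agree[of m] m m_c1 unfolding c1_def c2_def J_def by simp
  finally have "\<one>\<^bsub>X\<^esub> \<boxplus> (c2 \<odot> c1\<^sup>\<dagger> \<boxplus> c1 \<odot> m) = (c2 \<odot> m \<boxplus> c1 \<odot> c1\<^sup>\<dagger>) \<boxplus> (c2 \<odot> c1\<^sup>\<dagger> \<boxplus> c1 \<odot> m)"
    by simp
  also have "\<dots> = (c2 \<odot> m \<boxplus> c2 \<odot> c1\<^sup>\<dagger>) \<boxplus> (c1 \<odot> c1\<^sup>\<dagger> \<boxplus> c1 \<odot> m)"
    by (rule madd_interchange[OF homs(2,3,4,1)])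
  also have "\<dots> = \<zero>\<^bsub>X,X\<^esub>"
    using c1_m c2_m madd_commute[OF homs(3,1)] by simp
  finally show ?thesis
    using homs by blast
qed

end

lemma neg_id_ex: "\<exists>n. hom C n X X \<and> \<one>\<^bsub>X\<^esub> \<boxplus> n = \<zero>\<^bsub>X,X\<^esub>"
proof -
  obtain P s1 s2 where bp: "biproduct C X X P s1 s1\<^sup>\<dagger> s2 s2\<^sup>\<dagger>"
    by (rule obtain_orthonormal_biproduct)
  obtain d where d: "hom C d X P" "s1\<^sup>\<dagger> \<odot> d = \<one>\<^bsub>X\<^esub>" "s2\<^sup>\<dagger> \<odot> d = \<one>\<^bsub>X\<^esub>"
    using bp_tuple_ex[OF bp hom_id hom_id] .
  obtain g where "is_kernel C d g"
    using diagonal_is_kernel[OF bp d] by blast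
  moreover obtain l where "is_kernel C l d\<^sup>\<dagger>" "isometry C l"
    using isometric_kernel_ex by blast
  ultimately show ?thesis
    by (rule diagonal_neg_id[OF bp d])
qed

definition neg ("\<ominus> _" [80] 80) where
  "\<ominus> f = (SOME g. hom C g (sdom C f) (scod C f) \<and> f \<boxplus> g = \<zero>\<^bsub>sdom C f,scod C f\<^esub>)"

lemma neg_ex:
  assumes f: "hom C f A B"
  shows "\<exists>g. hom C g A B \<and> f \<boxplus> g = \<zero>\<^bsub>A,B\<^esub>"
proof -
  obtain n where n: "hom C n A A" "\<one>\<^bsub>A\<^esub> \<boxplus> n = \<zero>\<^bsub>A,A\<^esub>"
    using neg_id_ex by blast
  have "f \<boxplus> f \<odot> n = \<zero>\<^bsub>A,B\<^esub>"
    using comp_madd[OF hom_id n(1) f] n(2) f by (simp add: cat_simps)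
  moreover have "hom C (f \<odot> n) A B"
    using f n(1) by blast
  ultimately show ?thesis
    by blast
qed

lemma hom_neg [intro]: "hom C f A B \<Longrightarrow> hom C (\<ominus> f) A B"
  and madd_neg [simp]: "hom C f A B \<Longrightarrow> f \<boxplus> \<ominus> f = \<zero>\<^bsub>A,B\<^esub>"
proof -
  assume f: "hom C f A B"
  then have "hom C (\<ominus> f) A B \<and> f \<boxplus> \<ominus> f = \<zero>\<^bsub>A,B\<^esub>"
    unfolding neg_def hom_def using someI_ex[OF neg_ex[OF f, unfolded hom_def]] by simp
  then show "hom C (\<ominus> f) A B" "f \<boxplus> \<ominus> f = \<zero>\<^bsub>A,B\<^esub>"
    by auto
qed

lemma neg_unique:
  assumes f: "hom C f A B" and g: "hom C g A B" and sum: "f \<boxplus> g = \<zero>\<^bsub>A,B\<^esub>"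
  shows "\<ominus> f = g"
proof -
  have "\<ominus> f = \<zero>\<^bsub>A,B\<^esub> \<boxplus> \<ominus> f"
    using hom_neg[OF f] by simp
  also have "\<dots> = (g \<boxplus> f) \<boxplus> \<ominus> f"
    using madd_commute[OF f g] sum by simp
  also have "\<dots> = g"
    using madd_assoc[OF g f hom_neg[OF f]] f g by simp
  finally show ?thesis .
qed

lemma comp_neg:
  assumes f: "hom C f A B" and k: "hom C k B D"
  shows "k \<odot> \<ominus> f = \<ominus> (k \<odot> f)"
proof (rule neg_unique[symmetric])
  show "hom C (k \<odot> f) A D" "hom C (k \<odot> \<ominus> f) A D"
    using f k by auto
  show "k \<odot> f \<boxplus> k \<odot> \<ominus> f = \<zero>\<^bsub>A,D\<^esub>"
    using comp_madd[OF f hom_neg[OF f] k] f k by (simp add: cat_simps)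
qed

lemma neg_comp:
  assumes f: "hom C f A B" and h: "hom C h A' A"
  shows "(\<ominus> f) \<odot> h = \<ominus> (f \<odot> h)"
proof (rule neg_unique[symmetric])
  show "hom C (f \<odot> h) A' B" "hom C ((\<ominus> f) \<odot> h) A' B"
    using f h by auto
  show "f \<odot> h \<boxplus> (\<ominus> f) \<odot> h = \<zero>\<^bsub>A',B\<^esub>"
    using madd_comp[OF f hom_neg[OF f] h] f h by (simp add: cat_simps)
qed

lemma adj_neg:
  assumes f: "hom C f A B"
  shows "(\<ominus> f)\<^sup>\<dagger> = \<ominus> (f\<^sup>\<dagger>)"
proof (rule neg_unique[symmetric])
  show "hom C f\<^sup>\<dagger> B A" "hom C (\<ominus> f)\<^sup>\<dagger> B A"
    using f by auto
  show "f\<^sup>\<dagger> \<boxplus> (\<ominus> f)\<^sup>\<dagger> = \<zero>\<^bsub>B,A\<^esub>"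
    using adj_madd[OF f hom_neg[OF f]] f by simp
qed

lemma neg_neg:
  assumes f: "hom C f A B"
  shows "\<ominus> \<ominus> f = f"
  using neg_unique[OF hom_neg[OF f] f] madd_commute[OF f hom_neg[OF f]] f by simp

lemma adj_neg_comp_neg:
  assumes f: "hom C f A B"
  shows "(\<ominus> f)\<^sup>\<dagger> \<odot> \<ominus> f = f\<^sup>\<dagger> \<odot> f"
proof -
  have "(\<ominus> f)\<^sup>\<dagger> \<odot> \<ominus> f = \<ominus> \<ominus> (f\<^sup>\<dagger> \<odot> f)"
    using adj_neg[OF f] comp_neg[OF f hom_neg[OF hom_adj[OF f]]] neg_comp[OF hom_adj[OF f] f] f
    by simp
  then show ?thesis
    using neg_neg[OF hom_comp[OF f hom_adj[OF f]]] by simp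
qed

section \<open>Contractions\<close>

lemma contractive_iff:
  assumes "hom C f X Y"
  shows "contractive C f \<longleftrightarrow> (\<exists>y. sdom C y = X \<and> \<one>\<^bsub>X\<^esub> = f\<^sup>\<dagger> \<odot> f \<boxplus> y\<^sup>\<dagger> \<odot> y)"
  using assms unfolding contractive_def mle_def hermitian_def by (auto simp: cat_simps)

lemma isometry_contractive:
  assumes "isometry C f"
  shows "contractive C f"
proof -
  define X where "X = sdom C f"
  have f: "hom C f X (scod C f)"
    by (simp add: X_def hom_def)
  have "\<one>\<^bsub>X\<^esub> = f\<^sup>\<dagger> \<odot> f \<boxplus> \<zero>\<^bsub>X,X\<^esub>\<^sup>\<dagger> \<odot> \<zero>\<^bsub>X,X\<^esub>"
    using assms unfolding isometry_def X_def by (simp add: cat_simps)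
  then show ?thesis
    using contractive_iff[OF f] dom_zero by blast
qed

lemma contractive_comp:
  assumes fg: "sdom C g = scod C f" and cf: "contractive C f" and cg: "contractive C g"
  shows "contractive C (g \<odot> f)"
proof -
  define X Y Z where "X = sdom C f" and "Y = scod C f" and "Z = scod C g"
  have f: "hom C f X Y" and g: "hom C g Y Z"
    using fg by (simp_all add: X_def Y_def Z_def hom_def)
  obtain y where y: "sdom C y = X" "\<one>\<^bsub>X\<^esub> = f\<^sup>\<dagger> \<odot> f \<boxplus> y\<^sup>\<dagger> \<odot> y"
    using cf contractive_iff[OF f] by blast
  obtain w where w: "sdom C w = Y" "\<one>\<^bsub>Y\<^esub> = g\<^sup>\<dagger> \<odot> g \<boxplus> w\<^sup>\<dagger> \<odot> w"
    using cg contractive_iff[OF g] by blast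
  define W V where "W = scod C y" and "V = scod C w"
  have y': "hom C y X W" and w': "hom C w Y V"
    using y w by (simp_all add: W_def V_def hom_def)
  have wf: "hom C (w \<odot> f) X V"
    using w' f by blast
  obtain P s1 s2 where bp: "biproduct C V W P s1 s1\<^sup>\<dagger> s2 s2\<^sup>\<dagger>"
    by (rule obtain_orthonormal_biproduct)
  obtain u where u: "hom C u X P" "s1\<^sup>\<dagger> \<odot> u = w \<odot> f" "s2\<^sup>\<dagger> \<odot> u = y"
    using bp_tuple_ex[OF bp wf y'] .
  have "f\<^sup>\<dagger> \<odot> f = f\<^sup>\<dagger> \<odot> (g\<^sup>\<dagger> \<odot> g \<boxplus> w\<^sup>\<dagger> \<odot> w) \<odot> f"
    using f by (simp add: cat_simps flip: w(2))
  also have "\<dots> = (g \<odot> f)\<^sup>\<dagger> \<odot> (g \<odot> f) \<boxplus> (w \<odot> f)\<^sup>\<dagger> \<odot> (w \<odot> f)"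
    using madd_comp[of "g\<^sup>\<dagger> \<odot> g" Y Y "w\<^sup>\<dagger> \<odot> w" f X] comp_madd[of "g\<^sup>\<dagger> \<odot> g \<odot> f" X Y "w\<^sup>\<dagger> \<odot> w \<odot> f" "f\<^sup>\<dagger>" X]
      f g w' by (auto simp: cat_simps)
  finally have "\<one>\<^bsub>X\<^esub> = ((g \<odot> f)\<^sup>\<dagger> \<odot> (g \<odot> f) \<boxplus> (w \<odot> f)\<^sup>\<dagger> \<odot> (w \<odot> f)) \<boxplus> y\<^sup>\<dagger> \<odot> y"
    using y(2) by simp
  also have "\<dots> = (g \<odot> f)\<^sup>\<dagger> \<odot> (g \<odot> f) \<boxplus> u\<^sup>\<dagger> \<odot> u"
    using madd_assoc[of "(g \<odot> f)\<^sup>\<dagger> \<odot> (g \<odot> f)" X X "(w \<odot> f)\<^sup>\<dagger> \<odot> (w \<odot> f)" "y\<^sup>\<dagger> \<odot> y"]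
      adj_comp_tuple[OF bp u(1)] u f g wf y'
    by auto
  finally show ?thesis
    using contractive_iff[OF hom_comp[OF f g]] u(1) by (auto simp: hom_def)
qed

lemma contractive_adj_comp_isometry:
  assumes s: "hom C s Y P" "isometry C s" and m: "hom C m X P" "isometry C m"
  shows "contractive C (m\<^sup>\<dagger> \<odot> s)"
proof -
  define g F w where "g = m\<^sup>\<dagger> \<odot> s" and "F = g\<^sup>\<dagger> \<odot> g" and "w = \<ominus> (m \<odot> g)"
  have g: "hom C g Y X" and F: "hom C F Y Y" and mg: "hom C (m \<odot> g) Y P" and w: "hom C w Y P"
    using s m by (auto simp: g_def F_def w_def)
  have F_adj: "F\<^sup>\<dagger> = F"
    using g by (simp add: F_def cat_simps)
  have sw: "s\<^sup>\<dagger> \<odot> w = \<ominus> F"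
    using comp_neg[OF mg hom_adj[OF s(1)]] s m g
    by (simp add: w_def F_def g_def cat_simps)
  have "w\<^sup>\<dagger> \<odot> s = (s\<^sup>\<dagger> \<odot> w)\<^sup>\<dagger>"
    using s w by (simp add: cat_simps)
  also have "\<dots> = \<ominus> F"
    using sw adj_neg[OF F] F_adj by simp
  finally have "w\<^sup>\<dagger> \<odot> s = \<ominus> F" .
  moreover have "w\<^sup>\<dagger> \<odot> w = F"
    using adj_neg_comp_neg[OF mg] comp_reduce[of "m\<^sup>\<dagger>" m "\<one>\<^bsub>X\<^esub>" g] m g
    by (simp add: w_def F_def isometry_def cat_simps)
  ultimately have "(s \<boxplus> w)\<^sup>\<dagger> \<odot> (s \<boxplus> w) = (\<one>\<^bsub>Y\<^esub> \<boxplus> F) \<boxplus> (\<ominus> F \<boxplus> \<ominus> F)"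
    using adj_madd_comp_madd[OF s(1) w] s sw unfolding isometry_def by (simp add: hom_def)
  also have "\<dots> = \<one>\<^bsub>Y\<^esub> \<boxplus> \<ominus> F"
    using madd_interchange[OF hom_id F hom_neg[OF F] hom_neg[OF F]] hom_madd[OF hom_id hom_neg[OF F]] F
    by simp
  finally have "F \<boxplus> (s \<boxplus> w)\<^sup>\<dagger> \<odot> (s \<boxplus> w) = (F \<boxplus> \<ominus> F) \<boxplus> \<one>\<^bsub>Y\<^esub>"
    using madd_commute[OF hom_id hom_neg[OF F]] madd_assoc[OF F hom_neg[OF F] hom_id] by simp
  then have "\<one>\<^bsub>Y\<^esub> = g\<^sup>\<dagger> \<odot> g \<boxplus> (s \<boxplus> w)\<^sup>\<dagger> \<odot> (s \<boxplus> w)"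
    using F by (simp add: F_def)
  moreover have "sdom C (s \<boxplus> w) = Y"
    using hom_madd[OF s(1) w] by (simp add: hom_def)
  ultimately show ?thesis
    using contractive_iff[OF g] unfolding g_def by blast
qed

lemma contractive_adj:
  assumes "contractive C f"
  shows "contractive C f\<^sup>\<dagger>"
proof -
  define X Y where "X = sdom C f" and "Y = scod C f"
  have f: "hom C f X Y"
    by (simp add: X_def Y_def hom_def)
  obtain y where y: "sdom C y = X" "\<one>\<^bsub>X\<^esub> = f\<^sup>\<dagger> \<odot> f \<boxplus> y\<^sup>\<dagger> \<odot> y"
    using assms contractive_iff[OF f] by blast
  have y': "hom C y X (scod C y)"
    using y by (simp add: hom_def)
  obtain P s1 s2 where bp: "biproduct C Y (scod C y) P s1 s1\<^sup>\<dagger> s2 s2\<^sup>\<dagger>"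
    by (rule obtain_orthonormal_biproduct)
  obtain m where m: "hom C m X P" "s1\<^sup>\<dagger> \<odot> m = f" "s2\<^sup>\<dagger> \<odot> m = y"
    using bp_tuple_ex[OF bp f y'] .
  have "isometry C m"
    using adj_comp_tuple[OF bp m(1)] m y unfolding isometry_def by (simp add: hom_def)
  moreover have "isometry C s1"
    using bp_retractions[OF bp] bp_homs[OF bp] unfolding isometry_def by (simp add: hom_def)
  moreover have "f\<^sup>\<dagger> = m\<^sup>\<dagger> \<odot> s1"
    using m bp_homs[OF bp] by (auto simp: cat_simps)
  ultimately show ?thesis
    using contractive_adj_comp_isometry[OF bp_homs(1)[OF bp] _ m(1)] by simp
qed

end

theorem proposition7p3:
  fixes C :: "('o, 'm) scat"
  assumes "pre_hilbert C"
  shows "(\<forall>f. isometry C f \<longrightarrow> contractive C f)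
    \<and> (\<forall>f g. sdom C g = scod C f \<and> contractive C f \<and> contractive C g
             \<longrightarrow> contractive C (scomp C g f))
    \<and> (\<forall>f. contractive C f \<longrightarrow> contractive C (sstar C f))"
proof -
  interpret pre_hilbert_category C
    using assms by (rule pre_hilbert_category.intro)
  show ?thesis
    using isometry_contractive contractive_comp contractive_adj by blast
qed

end
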